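(* Let $n \ge 2$, let $U \subset \mathbb{R}^n$ be an open set, and suppose that $f \in C^\infty(U,\mathbb{R}^n)$ and $\Psi \in C^1\bigl([0,\infty),[0,\infty)\bigr)$. Then for every $\eta \in C_c^\infty\bigl(U,[0,\infty)\bigr)$ we have $$\biggl| \int_U \eta \Bigl[ n\Psi\bigl(|f|^2\bigr) + 2|f|^2 \Psi'\bigl(|f|^2\bigr)\Bigr] J_f \biggr| \le \int_U |\nabla \eta|\, |f|\, \Psi\bigl(|f|^2\bigr)\, \|\operatorname{cof} Df\| .$$
   Context: $J_f = \det Df$ is the Jacobian determinant of $f$, $\operatorname{cof} Df$ is the cofactor matrix of the differential $Df$, and $\|\cdot\|$ denotes the operator norm of a matrix. Integrals are with respect to Lebesgue measure on $U$. *)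

theory Defs
  imports "HOL-Analysis.Analysis"
begin

fun Ck_on :: "nat \<Rightarrow> ('a::euclidean_space \<Rightarrow> 'b::real_normed_vector) \<Rightarrow> 'a set \<Rightarrow> bool" where
  "Ck_on 0 g U = continuous_on U g"
| "Ck_on (Suc k) g U = (g differentiable_on U \<and>
      (\<forall>v\<in>Basis. Ck_on k (\<lambda>x. frechet_derivative g (at x) v) U))"

definition smooth_on :: "('a::euclidean_space \<Rightarrow> 'b::real_normed_vector) \<Rightarrow> 'a set \<Rightarrow> bool" where
  "smooth_on g U = (\<forall>k. Ck_on k g U)"

definition Dmat :: "(real^'n \<Rightarrow> real^'m) \<Rightarrow> real^'n \<Rightarrow> real^'n^'m" where
  "Dmat f x = matrix (frechet_derivative f (at x))"

definition jac :: "(real^'n \<Rightarrow> real^'n) \<Rightarrow> real^'n \<Rightarrow> real" where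
  "jac f x = det (Dmat f x)"

text \<open>Cofactor matrix: entry (i,j) is the (i,j) cofactor (-1)^(i+j) M_ij, written as the
  determinant of A with row i replaced by the j-th unit row vector.\<close>
definition cof :: "real^'n^'n \<Rightarrow> real^'n^'n" where
  "cof A = (\<chi> i j. det (\<chi> k l. if k = i then (if l = j then 1 else 0) else A $ k $ l))"

definition opnorm :: "real^'n^'m \<Rightarrow> real" where
  "opnorm A = onorm (\<lambda>v. A *v v)"

definition grad :: "(real^'n \<Rightarrow> real) \<Rightarrow> real^'n \<Rightarrow> real^'n" where
  "grad g x = (\<chi> i. frechet_derivative g (at x) (axis i 1))"

end

theory Submission
  imports Defs
begin

text \<open>Put \<open>S = (cof Df)\<^sup>T f\<close>, i.e. \<open>S\<^sub>j = \<Sum>\<^sub>i f\<^sub>i (cof Df)\<^sub>i\<^sub>j\<close>. The rows of \<open>cof Df\<close> are divergence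
  free (Piola identity; this is where the symmetry of the second derivatives of \<open>f\<close> enters), so
  Laplace expansion gives \<open>div S = n J\<^sub>f\<close> and \<open>\<nabla>|f|\<^sup>2 \<cdot> S = 2 |f|\<^sup>2 J\<^sub>f\<close>. Hence the field
  \<open>\<eta> \<Psi>(|f|\<^sup>2) S\<close> has divergence \<open>\<Psi>(|f|\<^sup>2) \<nabla>\<eta> \<cdot> S + \<eta> [n \<Psi>(|f|\<^sup>2) + 2 |f|\<^sup>2 \<Psi>'(|f|\<^sup>2)] J\<^sub>f\<close>.
  This field has compact support in \<open>U\<close>, so its divergence integrates to zero, and the inequality
  follows from \<open>\<Psi> \<ge> 0\<close> and \<open>|\<nabla>\<eta> \<cdot> S| \<le> |\<nabla>\<eta>| \<parallel>cof Df\<parallel> |f|\<close>.\<close>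

section \<open>Derivatives along lines\<close>

definition has_dir_derivative_on ::
    "('a::real_normed_vector \<Rightarrow> real) \<Rightarrow> 'a \<Rightarrow> ('a \<Rightarrow> real) \<Rightarrow> 'a set \<Rightarrow> bool" where
  "has_dir_derivative_on g v g' S \<longleftrightarrow>
     (\<forall>y\<in>S. ((\<lambda>t. g (y + t *\<^sub>R v)) has_real_derivative g' y) (at 0))"

lemma has_dir_derivative_on_const: "has_dir_derivative_on (\<lambda>x. c) v (\<lambda>x. 0) S"
  by (simp add: has_dir_derivative_on_def)

lemma has_dir_derivative_on_mult:
  "has_dir_derivative_on g v g' S \<Longrightarrow> has_dir_derivative_on h v h' S \<Longrightarrow>
    has_dir_derivative_on (\<lambda>x. g x * h x) v (\<lambda>x. g' x * h x + g x * h' x) S"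
  unfolding has_dir_derivative_on_def by (auto intro!: derivative_eq_intros)

lemma has_dir_derivative_on_cmult:
  "has_dir_derivative_on g v g' S \<Longrightarrow> has_dir_derivative_on (\<lambda>x. c * g x) v (\<lambda>x. c * g' x) S"
  unfolding has_dir_derivative_on_def by (auto intro!: derivative_eq_intros)

lemma has_dir_derivative_on_sum:
  "(\<And>i. i \<in> I \<Longrightarrow> has_dir_derivative_on (g i) v (g' i) S) \<Longrightarrow>
    has_dir_derivative_on (\<lambda>x. \<Sum>i\<in>I. g i x) v (\<lambda>x. \<Sum>i\<in>I. g' i x) S"
  unfolding has_dir_derivative_on_def by (auto intro!: DERIV_sum)

lemma has_dir_derivative_on_prod:
  assumes "\<And>i. i \<in> I \<Longrightarrow> has_dir_derivative_on (g i) v (g' i) S"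
  shows "has_dir_derivative_on (\<lambda>x. \<Prod>i\<in>I. g i x) v (\<lambda>x. \<Sum>i\<in>I. g' i x * (\<Prod>j\<in>I-{i}. g j x)) S"
  unfolding has_dir_derivative_on_def
proof
  fix y assume "y \<in> S"
  then have "((\<lambda>t. g i (y + t *\<^sub>R v)) has_real_derivative g' i y) (at 0)" if "i \<in> I" for i
    using that assms by (auto simp: has_dir_derivative_on_def)
  from has_field_derivative_prod[OF this] show "((\<lambda>t. \<Prod>i\<in>I. g i (y + t *\<^sub>R v)) has_real_derivative
      (\<Sum>i\<in>I. g' i y * (\<Prod>j\<in>I-{i}. g j y))) (at 0)"
    by simp
qed

lemma has_dir_derivative_on_compose_nonneg:
  assumes \<Psi>: "\<And>t. t \<ge> 0 \<Longrightarrow> (\<Psi> has_real_derivative \<Psi>' t) (at t within {0..})"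
    and g_nonneg: "\<And>x. g x \<ge> 0" and g: "has_dir_derivative_on g v g' S"
  shows "has_dir_derivative_on (\<lambda>x. \<Psi> (g x)) v (\<lambda>x. \<Psi>' (g x) * g' x) S"
  unfolding has_dir_derivative_on_def
proof
  fix y assume "y \<in> S"
  let ?h = "\<lambda>t. g (y + t *\<^sub>R v)"
  have h: "(?h has_real_derivative g' y) (at 0 within UNIV)"
    using g \<open>y \<in> S\<close> by (auto simp: has_dir_derivative_on_def)
  have "(\<Psi> has_real_derivative \<Psi>' (?h 0)) (at (?h 0) within range ?h)"
    by (rule DERIV_subset[OF \<Psi>]) (use g_nonneg in auto)
  from DERIV_image_chain[OF this h]
  show "((\<lambda>t. \<Psi> (g (y + t *\<^sub>R v))) has_real_derivative \<Psi>' (g y) * g' y) (at 0)"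
    by (simp add: o_def)
qed

lemma has_dir_derivative_on_cong:
  "has_dir_derivative_on g v g' S \<Longrightarrow> (\<And>x. g x = h x) \<Longrightarrow> (\<And>x. x \<in> S \<Longrightarrow> g' x = h' x) \<Longrightarrow>
    has_dir_derivative_on h v h' S"
  unfolding has_dir_derivative_on_def by (metis ext)

lemma has_dir_derivative_on_imp_has_real_derivative:
  assumes "has_dir_derivative_on g v g' S" "y + s *\<^sub>R v \<in> S"
  shows "((\<lambda>t. g (y + t *\<^sub>R v)) has_real_derivative g' (y + s *\<^sub>R v)) (at s)"
proof -
  have "((\<lambda>t. g ((y + s *\<^sub>R v) + t *\<^sub>R v)) has_real_derivative g' (y + s *\<^sub>R v)) (at 0)"
    using assms by (auto simp: has_dir_derivative_on_def)
  then have "((\<lambda>t. g (y + (t + s) *\<^sub>R v)) has_real_derivative g' (y + s *\<^sub>R v)) (at 0)"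
    by (simp add: algebra_simps)
  then show ?thesis using DERIV_shift[of "\<lambda>t. g (y + t *\<^sub>R v)" _ 0 s] by simp
qed

lemma has_vector_derivative_line_frechet:
  assumes "g differentiable (at y)"
  shows "((\<lambda>t. g (y + t *\<^sub>R v)) has_vector_derivative frechet_derivative g (at y) v) (at 0)"
proof -
  have g: "(g has_derivative frechet_derivative g (at y)) (at y)"
    using assms frechet_derivative_works by blast
  have "((\<lambda>t. y + t *\<^sub>R v) has_derivative (\<lambda>t. t *\<^sub>R v)) (at 0)"
    by (auto intro!: derivative_eq_intros)
  from diff_chain_at[OF this, of g] g
  have "((\<lambda>t. g (y + t *\<^sub>R v)) has_derivative (\<lambda>t. frechet_derivative g (at y) (t *\<^sub>R v))) (at 0)"
    by (simp add: o_def)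
  then show ?thesis
    using linear_scale[OF has_derivative_linear[OF g]] by (simp add: has_vector_derivative_def)
qed

lemma has_dir_derivative_on_frechet:
  fixes g :: "'a::real_normed_vector \<Rightarrow> real"
  assumes "g differentiable_on U" "open U"
  shows "has_dir_derivative_on g v (\<lambda>x. frechet_derivative g (at x) v) U"
  using has_vector_derivative_line_frechet assms differentiable_on_eq_differentiable_at
  by (fastforce simp: has_dir_derivative_on_def has_real_derivative_iff_has_vector_derivative)

lemma has_dir_derivative_on_frechet_component:
  fixes g :: "'a::real_normed_vector \<Rightarrow> real^'m"
  assumes "g differentiable_on U" "open U"
  shows "has_dir_derivative_on (\<lambda>x. g x $ k) v (\<lambda>x. frechet_derivative g (at x) v $ k) U"
  unfolding has_dir_derivative_on_def has_real_derivative_iff_has_vector_derivative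
proof
  fix y assume "y \<in> U"
  then have "((\<lambda>t. g (y + t *\<^sub>R v)) has_vector_derivative frechet_derivative g (at y) v) (at 0)"
    using assms differentiable_on_eq_differentiable_at has_vector_derivative_line_frechet by blast
  from bounded_linear.has_vector_derivative[OF bounded_linear_vec_nth this]
  show "((\<lambda>t. g (y + t *\<^sub>R v) $ k) has_vector_derivative frechet_derivative g (at y) v $ k) (at 0)" .
qed

section \<open>Symmetry of second derivatives\<close>

lemma second_difference_mvt:
  assumes segment: "\<And>\<sigma> \<tau>. 0 \<le> \<sigma> \<Longrightarrow> \<sigma> \<le> s \<Longrightarrow> 0 \<le> \<tau> \<Longrightarrow> \<tau> \<le> s \<Longrightarrow> x + \<sigma> *\<^sub>R a + \<tau> *\<^sub>R b \<in> U"
    and "s > 0" and ga: "has_dir_derivative_on g a ga U" and gab: "has_dir_derivative_on ga b gab U"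
  obtains \<sigma> \<tau> where "0 \<le> \<sigma>" "\<sigma> \<le> s" "0 \<le> \<tau>" "\<tau> \<le> s"
    "g (x + s *\<^sub>R a + s *\<^sub>R b) - g (x + s *\<^sub>R a) - g (x + s *\<^sub>R b) + g x
       = s * s * gab (x + \<sigma> *\<^sub>R a + \<tau> *\<^sub>R b)"
proof -
  define \<phi> where "\<phi> \<sigma> = g ((x + s *\<^sub>R b) + \<sigma> *\<^sub>R a) - g (x + \<sigma> *\<^sub>R a)" for \<sigma>
  have "\<exists>\<sigma>. 0 < \<sigma> \<and> \<sigma> < s \<and> \<phi> s - \<phi> 0 = (s - 0) * (ga ((x + s *\<^sub>R b) + \<sigma> *\<^sub>R a) - ga (x + \<sigma> *\<^sub>R a))"
  proof (rule MVT2[OF \<open>s > 0\<close>])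
    fix \<sigma> assume "0 \<le> \<sigma>" "\<sigma> \<le> s"
    then have "(x + s *\<^sub>R b) + \<sigma> *\<^sub>R a \<in> U" "x + \<sigma> *\<^sub>R a \<in> U"
      using segment[of \<sigma> s] segment[of \<sigma> 0] \<open>s > 0\<close> by (simp_all add: add_ac)
    then show "(\<phi> has_real_derivative ga ((x + s *\<^sub>R b) + \<sigma> *\<^sub>R a) - ga (x + \<sigma> *\<^sub>R a)) (at \<sigma>)"
      unfolding \<phi>_def by (intro DERIV_diff has_dir_derivative_on_imp_has_real_derivative[OF ga])
  qed
  then obtain \<sigma> where \<sigma>: "0 < \<sigma>" "\<sigma> < s" and \<phi>_diff:
    "\<phi> s - \<phi> 0 = s * (ga ((x + \<sigma> *\<^sub>R a) + s *\<^sub>R b) - ga ((x + \<sigma> *\<^sub>R a) + 0 *\<^sub>R b))"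
    by (auto simp: add_ac)
  have "\<exists>\<tau>. 0 < \<tau> \<and> \<tau> < s \<and> ga ((x + \<sigma> *\<^sub>R a) + s *\<^sub>R b) - ga ((x + \<sigma> *\<^sub>R a) + 0 *\<^sub>R b)
      = (s - 0) * gab ((x + \<sigma> *\<^sub>R a) + \<tau> *\<^sub>R b)"
  proof (rule MVT2[OF \<open>s > 0\<close>])
    fix \<tau> assume "0 \<le> \<tau>" "\<tau> \<le> s"
    then show "((\<lambda>t. ga ((x + \<sigma> *\<^sub>R a) + t *\<^sub>R b)) has_real_derivative gab ((x + \<sigma> *\<^sub>R a) + \<tau> *\<^sub>R b)) (at \<tau>)"
      using segment[of \<sigma> \<tau>] \<sigma> by (intro has_dir_derivative_on_imp_has_real_derivative[OF gab]) simp
  qed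
  then obtain \<tau> where "0 < \<tau>" "\<tau> < s" and
    "ga ((x + \<sigma> *\<^sub>R a) + s *\<^sub>R b) - ga ((x + \<sigma> *\<^sub>R a) + 0 *\<^sub>R b) = s * gab ((x + \<sigma> *\<^sub>R a) + \<tau> *\<^sub>R b)"
    by auto
  moreover have "g (x + s *\<^sub>R a + s *\<^sub>R b) - g (x + s *\<^sub>R a) - g (x + s *\<^sub>R b) + g x = \<phi> s - \<phi> 0"
    unfolding \<phi>_def by (simp add: add_ac)
  ultimately show ?thesis
    using that[of \<sigma> \<tau>] \<sigma> \<phi>_diff by simp
qed

lemma second_difference_quotient_tendsto:
  assumes "open U" "x \<in> U" and ga: "has_dir_derivative_on g a ga U"
    and gab: "has_dir_derivative_on ga b gab U" and "isCont gab x"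
  shows "((\<lambda>s. (g (x + s *\<^sub>R a + s *\<^sub>R b) - g (x + s *\<^sub>R a) - g (x + s *\<^sub>R b) + g x) / (s * s))
           \<longlongrightarrow> gab x) (at_right 0)"
proof (rule tendstoI)
  fix \<epsilon> :: real assume "\<epsilon> > 0"
  obtain d where "d > 0" and d: "\<And>y. dist y x < d \<Longrightarrow> dist (gab y) (gab x) < \<epsilon>"
    using \<open>isCont gab x\<close> \<open>\<epsilon> > 0\<close> unfolding continuous_at_eps_delta by blast
  obtain r where "r > 0" "ball x r \<subseteq> U" using assms(1,2) open_contains_ball by blast
  define M where "M = norm a + norm b + 1"
  have "M > 0" by (simp add: M_def add_nonneg_pos)
  have near: "dist (x + \<sigma> *\<^sub>R a + \<tau> *\<^sub>R b) x < min d r"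
    if "0 \<le> \<sigma>" "\<sigma> \<le> s" "0 \<le> \<tau>" "\<tau> \<le> s" "s < min d r / M" for s \<sigma> \<tau>
  proof -
    have "dist (x + \<sigma> *\<^sub>R a + \<tau> *\<^sub>R b) x \<le> \<sigma> * norm a + \<tau> * norm b"
      using that norm_triangle_ineq[of "\<sigma> *\<^sub>R a" "\<tau> *\<^sub>R b"] by (simp add: dist_norm)
    also have "\<dots> \<le> s * norm a + s * norm b"
      using that by (intro add_mono mult_right_mono) auto
    also have "\<dots> \<le> s * M"
      using that by (simp add: M_def distrib_left)
    also have "\<dots> < min d r" using that \<open>M > 0\<close> by (simp add: pos_less_divide_eq)
    finally show ?thesis .
  qed
  have "eventually (\<lambda>s. s \<in> {0<..<min d r / M}) (at_right (0::real))"
    using \<open>d > 0\<close> \<open>r > 0\<close> \<open>M > 0\<close> by (intro eventually_at_right_real) simp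
  then show "eventually (\<lambda>s. dist ((g (x + s *\<^sub>R a + s *\<^sub>R b) - g (x + s *\<^sub>R a) - g (x + s *\<^sub>R b) + g x)
      / (s * s)) (gab x) < \<epsilon>) (at_right 0)"
  proof eventually_elim
    case (elim s)
    have "x + \<sigma> *\<^sub>R a + \<tau> *\<^sub>R b \<in> U" if "0 \<le> \<sigma>" "\<sigma> \<le> s" "0 \<le> \<tau>" "\<tau> \<le> s" for \<sigma> \<tau>
      using near[OF that] elim \<open>ball x r \<subseteq> U\<close> by (auto simp: dist_commute)
    then obtain \<sigma> \<tau> where "0 \<le> \<sigma>" "\<sigma> \<le> s" "0 \<le> \<tau>" "\<tau> \<le> s" and
      eq: "g (x + s *\<^sub>R a + s *\<^sub>R b) - g (x + s *\<^sub>R a) - g (x + s *\<^sub>R b) + g x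
        = s * s * gab (x + \<sigma> *\<^sub>R a + \<tau> *\<^sub>R b)"
      using second_difference_mvt[OF _ _ ga gab] elim by (metis greaterThanLessThan_iff)
    then show ?case
      using d near elim eq by simp
  qed
qed

text \<open>Both mixed derivatives are the limit of the same symmetric second difference quotient.\<close>
lemma dir_derivatives_commute:
  assumes "open U" "x \<in> U"
    and "has_dir_derivative_on g a ga U" "has_dir_derivative_on ga b gab U"
    and "has_dir_derivative_on g b gb U" "has_dir_derivative_on gb a gba U"
    and "isCont gab x" "isCont gba x"
  shows "gab x = gba x"
proof -
  have "x + s *\<^sub>R b + s *\<^sub>R a = x + s *\<^sub>R a + s *\<^sub>R b" for s by (simp add: algebra_simps)
  then show ?thesis
    using second_difference_quotient_tendsto[of U x g a ga b gab]
      second_difference_quotient_tendsto[of U x g b gb a gba] assms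
    by (intro tendsto_unique[OF trivial_limit_at_right_real]) (simp_all add: algebra_simps)
qed

section \<open>Integrals of derivatives of compactly supported functions\<close>

lemma continuous_on_extend_by_0:
  fixes g :: "'a::t2_space \<Rightarrow> 'b::real_normed_vector"
  assumes "open U" "compact K" "K \<subseteq> U" "continuous_on U g" "\<And>x. x \<in> U \<Longrightarrow> x \<notin> K \<Longrightarrow> g x = 0"
  shows "continuous_on UNIV (\<lambda>x. if x \<in> U then g x else 0)"
proof -
  have "continuous_on (U \<union> - K) (\<lambda>x. if x \<in> U then g x else 0)"
  proof (rule continuous_on_open_Un)
    show "continuous_on U (\<lambda>x. if x \<in> U then g x else 0)"
      using assms(4) by (rule continuous_on_eq) auto
    show "continuous_on (- K) (\<lambda>x. if x \<in> U then g x else 0)"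
      by (rule continuous_on_eq[OF continuous_on_const[of _ 0]]) (use assms(5) in auto)
  qed (use assms(1) compact_imp_closed[OF assms(2)] in auto)
  moreover have "U \<union> - K = UNIV" using assms(3) by auto
  ultimately show ?thesis by simp
qed

lemma integrable_on_compact_support:
  fixes g :: "'a::euclidean_space \<Rightarrow> real"
  assumes "continuous_on UNIV g" "compact K" "\<And>x. x \<notin> K \<Longrightarrow> g x = 0"
  shows "g integrable_on UNIV"
proof -
  obtain a where "K \<subseteq> cbox (-a) a"
    using assms(2) compact_imp_bounded bounded_subset_cbox_symmetric by metis
  moreover have "g integrable_on cbox (-a) a"
    by (rule integrable_continuous, rule continuous_on_subset[OF assms(1)]) auto
  ultimately show ?thesis
    by (rule_tac integrable_on_superset) (use assms(3) in auto)
qed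

lemma integrable_on_open_compact_support:
  fixes g :: "'a::euclidean_space \<Rightarrow> real"
  assumes "open U" "compact K" "K \<subseteq> U" "continuous_on U g" "\<And>x. x \<in> U \<Longrightarrow> x \<notin> K \<Longrightarrow> g x = 0"
  shows "g integrable_on U"
proof -
  have "(\<lambda>x. if x \<in> U then g x else 0) integrable_on UNIV"
    by (rule integrable_on_compact_support[OF continuous_on_extend_by_0[OF assms] assms(2)])
      (use assms(5) in auto)
  then show ?thesis using integrable_restrict_UNIV by blast
qed

lemma has_integral_shift_compact_support:
  fixes h :: "'a::euclidean_space \<Rightarrow> real"
  assumes "(h has_integral I) (cbox a b)" "\<And>x. x \<notin> cbox a b \<Longrightarrow> h x = 0"
  shows "((\<lambda>y. h (y + c)) has_integral I) UNIV"
proof (rule has_integral_on_superset[OF has_integral_shift_cbox[OF assms(1)]])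
  fix y assume "y \<notin> cbox (a - c) (b - c)"
  then have "y + c \<notin> cbox a b" by (force simp: mem_box inner_diff_left inner_add_left)
  then show "h (y + c) = 0" using assms(2) by blast
qed auto

lemma compact_shifts_subset_cbox:
  fixes K :: "'a::euclidean_space set"
  assumes "compact K"
  obtains a where "\<And>s y. \<bar>s\<bar> < 1 \<Longrightarrow> y + s *\<^sub>R e \<in> K \<Longrightarrow> y \<in> cbox (-a) a"
proof -
  obtain R where R: "\<And>x. x \<in> K \<Longrightarrow> norm x \<le> R"
    using \<open>compact K\<close> compact_imp_bounded bounded_iff by metis
  obtain a :: 'a where a: "cball 0 (R + norm e) \<subseteq> cbox (-a) a"
    using bounded_cball bounded_subset_cbox_symmetric by metis
  have "y \<in> cbox (-a) a" if "\<bar>s\<bar> < 1" "y + s *\<^sub>R e \<in> K" for s y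
  proof -
    have "norm y \<le> norm (y + s *\<^sub>R e) + \<bar>s\<bar> * norm e"
      using norm_triangle_ineq4[of "y + s *\<^sub>R e" "s *\<^sub>R e"] by simp
    also have "\<dots> \<le> R + norm e"
      using R[OF that(2)] that(1) by (intro add_mono mult_left_le_one_le) auto
    finally show ?thesis using a by auto
  qed
  then show ?thesis using that by blast
qed

lemma integral_cbox_shift_eq:
  fixes h :: "'a::euclidean_space \<Rightarrow> real"
  assumes h_cont: "continuous_on UNIV h" and h_0: "\<And>x. x \<notin> K \<Longrightarrow> h x = 0"
    and box: "\<And>r y. \<bar>r\<bar> < 1 \<Longrightarrow> y + r *\<^sub>R e \<in> K \<Longrightarrow> y \<in> cbox (-a) a" and "\<bar>t\<bar> < 1"
  shows "integral (cbox (-a) a) (\<lambda>y. h (y + t *\<^sub>R e)) = integral (cbox (-a) a) h"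
proof -
  have "(h has_integral integral (cbox (-a) a) h) (cbox (-a) a)"
    by (rule integrable_integral, rule integrable_continuous, rule continuous_on_subset[OF h_cont]) auto
  then have "((\<lambda>y. h (y + t *\<^sub>R e)) has_integral integral (cbox (-a) a) h) UNIV"
    by (rule has_integral_shift_compact_support) (use box[of 0] h_0 in auto)
  then have "integral UNIV (\<lambda>y. h (y + t *\<^sub>R e)) = integral (cbox (-a) a) h"
    by (rule integral_unique)
  moreover have "(\<lambda>y. if y \<in> cbox (-a) a then h (y + t *\<^sub>R e) else 0) = (\<lambda>y. h (y + t *\<^sub>R e))"
    using box[OF \<open>\<bar>t\<bar> < 1\<close>] h_0 by (auto simp: fun_eq_iff)
  ultimately show ?thesis
    using integral_restrict_UNIV[of "cbox (-a) a" "\<lambda>y. h (y + t *\<^sub>R e)"] by simp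
qed

text \<open>Integration by parts against the constant 1: the integral of the translates
  \<open>h (\<cdot> + s e)\<close> does not depend on \<open>s\<close>, and by Leibniz' rule its derivative is \<open>\<integral> h'\<close>.\<close>
lemma integral_dir_derivative_eq_0:
  fixes h h' :: "'a::euclidean_space \<Rightarrow> real"
  assumes "compact K" and h_0: "\<And>x. x \<notin> K \<Longrightarrow> h x = 0" and h'_0: "\<And>x. x \<notin> K \<Longrightarrow> h' x = 0"
    and h_cont: "continuous_on UNIV h" and h'_cont: "continuous_on UNIV h'"
    and h': "has_dir_derivative_on h e h' UNIV"
  shows "integral UNIV h' = 0"
proof -
  obtain a where box: "\<And>s y. \<bar>s\<bar> < 1 \<Longrightarrow> y + s *\<^sub>R e \<in> K \<Longrightarrow> y \<in> cbox (-a) a"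
    using compact_shifts_subset_cbox[OF \<open>compact K\<close>] by blast
  define G where "G s = integral (cbox (-a) a) (\<lambda>y. h (y + s *\<^sub>R e))" for s
  have G_const: "G s = integral (cbox (-a) a) h" if "s \<in> ball 0 1" for s
  proof -
    have "\<bar>s\<bar> < 1" using that by simp
    from integral_cbox_shift_eq[OF h_cont h_0 box this] show ?thesis by (simp add: G_def)
  qed
  have "(G has_field_derivative integral (cbox (-a) a) (\<lambda>y. h' (y + 0 *\<^sub>R e))) (at 0 within ball 0 1)"
    unfolding G_def
  proof (rule leibniz_rule_field_derivative[where fx="\<lambda>s y. h' (y + s *\<^sub>R e)"])
    fix s :: real and y
    show "((\<lambda>s. h (y + s *\<^sub>R e)) has_real_derivative h' (y + s *\<^sub>R e)) (at s within ball 0 1)"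
      by (rule has_field_derivative_at_within, rule has_dir_derivative_on_imp_has_real_derivative[OF h']) auto
    show "(\<lambda>y. h (y + s *\<^sub>R e)) integrable_on cbox (-a) a"
      by (rule integrable_continuous, rule continuous_on_compose2[OF h_cont]) (auto intro!: continuous_intros)
  next
    show "continuous_on (ball 0 1 \<times> cbox (-a) a) (\<lambda>(s, y). h' (y + s *\<^sub>R e))"
      unfolding case_prod_unfold
      by (rule continuous_on_compose2[OF h'_cont]) (auto intro!: continuous_intros)
  qed auto
  then have "(G has_field_derivative integral (cbox (-a) a) h') (at 0)"
    using at_within_open[of 0 "ball (0::real) 1"] by simp
  then have "((\<lambda>s. integral (cbox (-a) a) h) has_field_derivative integral (cbox (-a) a) h') (at 0)"
    by (rule has_field_derivative_transform_within_open[of _ _ _ "ball 0 1"]) (auto simp: G_const)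
  then have "integral (cbox (-a) a) h' = 0"
    using DERIV_const DERIV_unique by blast
  moreover have "(\<lambda>x. if x \<in> cbox (-a) a then h' x else 0) = h'"
    using box[of 0] h'_0 by (auto simp: fun_eq_iff)
  then have "integral (cbox (-a) a) h' = integral UNIV h'"
    using integral_restrict_UNIV[of "cbox (-a) a" h'] by simp
  ultimately show ?thesis by simp
qed

lemma has_real_derivative_line_locally_0:
  fixes y v :: "'a::real_normed_vector"
  assumes "open N" "y \<in> N" "\<And>x. x \<in> N \<Longrightarrow> g x = 0"
  shows "((\<lambda>t. g (y + t *\<^sub>R v)) has_real_derivative 0) (at 0)"
proof -
  have "open ((\<lambda>t::real. y + t *\<^sub>R v) -` N)"
    by (rule continuous_open_vimage[OF \<open>open N\<close>]) (intro continuous_intros)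
  then show ?thesis
    by (rule has_field_derivative_transform_within_open[OF DERIV_const])
      (use assms(2,3) in auto)
qed

lemma integral_dir_derivative_eq_0_open:
  fixes g g' :: "'a::euclidean_space \<Rightarrow> real"
  assumes "open U" "compact K" "K \<subseteq> U" and g_0: "\<And>x. x \<notin> K \<Longrightarrow> g x = 0"
    and g_cont: "continuous_on U g" and g'_cont: "continuous_on U g'"
    and g': "has_dir_derivative_on g v g' U"
  shows "g' integrable_on U" "integral U g' = 0"
proof -
  have "open (- K)" using compact_imp_closed[OF \<open>compact K\<close>] by auto
  have g'_0: "g' x = 0" if "x \<in> U" "x \<notin> K" for x
    using has_dir_derivative_on_imp_has_real_derivative[OF g', of x 0]
      has_real_derivative_line_locally_0[OF \<open>open (- K)\<close>, of x g v] that g_0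
    by (auto intro: DERIV_unique)
  then show "g' integrable_on U"
    using integrable_on_open_compact_support[OF assms(1-3) g'_cont] by blast
  define h' where "h' x = (if x \<in> U then g' x else 0)" for x
  have "has_dir_derivative_on g v h' UNIV"
    unfolding has_dir_derivative_on_def
  proof
    fix y :: 'a
    show "((\<lambda>t. g (y + t *\<^sub>R v)) has_real_derivative h' y) (at 0)"
    proof (cases "y \<in> U")
      case True
      then show ?thesis using g' by (simp add: has_dir_derivative_on_def h'_def)
    next
      case False
      then show ?thesis
        using has_real_derivative_line_locally_0[OF \<open>open (- K)\<close>, of y g v] g_0 \<open>K \<subseteq> U\<close>
        by (auto simp: h'_def)
    qed
  qed
  moreover have "continuous_on UNIV g"
  proof -
    have "(\<lambda>x. if x \<in> U then g x else 0) = g" using g_0 \<open>K \<subseteq> U\<close> by (auto simp: fun_eq_iff)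
    with continuous_on_extend_by_0[OF assms(1-3) g_cont] g_0 show ?thesis by metis
  qed
  moreover have "continuous_on UNIV h'"
    unfolding h'_def by (rule continuous_on_extend_by_0[OF assms(1-3) g'_cont g'_0])
  moreover have "h' x = 0" if "x \<notin> K" for x
    using g'_0 that by (simp add: h'_def)
  ultimately have "integral UNIV h' = 0"
    using integral_dir_derivative_eq_0[OF \<open>compact K\<close>, of g h'] g_0 by blast
  then show "integral U g' = 0"
    unfolding h'_def[abs_def] integral_restrict_UNIV .
qed

lemma cof_eq_det_replace_row: "cof A $ i $ j = det (\<chi> r. if r = i then axis j 1 else A $ r)"
  unfolding cof_def vec_lambda_beta by (rule arg_cong[where f=det]) (simp add: vec_eq_iff axis_def)

lemma laplace_expansion_cof:
  fixes A :: "real^'n^'n"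
  shows "(\<Sum>j\<in>UNIV. A $ k $ j * cof A $ i $ j) = (if k = i then det A else 0)"
proof -
  have "(\<Sum>j\<in>UNIV. A $ k $ j * cof A $ i $ j)
      = (\<Sum>j\<in>UNIV. det (\<chi> r. if r = i then A $ k $ j *s axis j 1 else A $ r))"
    using det_row_mul[where k=i and a="\<lambda>_. axis _ 1" and b="\<lambda>r. A $ r"]
    by (simp add: cof_eq_det_replace_row)
  also have "\<dots> = det (\<chi> r. if r = i then (\<Sum>j\<in>UNIV. A $ k $ j *s axis j 1) else A $ r)"
    using det_linear_row_sum[where a="\<lambda>r j. A $ k $ j *s axis j 1" and k=i and c="\<lambda>r. A $ r"]
    by simp
  also have "\<dots> = det (\<chi> r. if r = i then A $ k else A $ r)"
    by (simp only: basis_expansion)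
  also have "\<dots> = (if k = i then det A else 0)"
  proof (cases "k = i")
    case True
    then have "(\<chi> r. if r = i then A $ k else A $ r) = A" by (simp add: vec_eq_iff)
    then show ?thesis using True by simp
  next
    case False
    then show ?thesis by (simp add: det_identical_rows[OF False] row_def vec_eq_iff)
  qed
  finally show ?thesis .
qed

text \<open>The derivative of the \<open>(i, j)\<close> cofactor of a matrix whose entries \<open>A\<close> have derivatives
  \<open>A'\<close>, from the Leibniz formula.\<close>
definition cof_deriv :: "('n::finite \<Rightarrow> 'n \<Rightarrow> real) \<Rightarrow> ('n \<Rightarrow> 'n \<Rightarrow> real) \<Rightarrow> 'n \<Rightarrow> 'n \<Rightarrow> real" where
  "cof_deriv A A' i j = (\<Sum>p\<in>{p. p permutes UNIV}. of_int (sign p) *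
      (\<Sum>l\<in>UNIV. (if l = i then 0 else A' l (p l)) *
         (\<Prod>k\<in>UNIV-{l}. (if k = i then (if p k = j then 1 else 0) else A k (p k)))))"

lemma has_dir_derivative_on_cof:
  fixes A A' :: "'n::finite \<Rightarrow> 'n \<Rightarrow> 'a::real_normed_vector \<Rightarrow> real"
  assumes "\<And>k l. has_dir_derivative_on (A k l) v (A' k l) S"
  shows "has_dir_derivative_on (\<lambda>x. cof (\<chi> k l. A k l x) $ i $ j) v
           (\<lambda>x. cof_deriv (\<lambda>k l. A k l x) (\<lambda>k l. A' k l x) i j) S"
proof -
  have "has_dir_derivative_on (\<lambda>x. if k = i then (if c = j then 1 else 0) else A k c x) v
      (\<lambda>x. if k = i then 0 else A' k c x) S" for k c
    by (cases "k = i") (auto simp: assms has_dir_derivative_on_const)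
  then have "has_dir_derivative_on
      (\<lambda>x. \<Sum>p\<in>{p. p permutes UNIV}. of_int (sign p) *
         (\<Prod>k\<in>UNIV. (if k = i then (if p k = j then 1 else 0) else A k (p k) x))) v
      (\<lambda>x. cof_deriv (\<lambda>k l. A k l x) (\<lambda>k l. A' k l x) i j) S"
    unfolding cof_deriv_def
    by (intro has_dir_derivative_on_sum has_dir_derivative_on_cmult has_dir_derivative_on_prod)
  then show ?thesis
    by (rule has_dir_derivative_on_cong)
      (auto simp: cof_def det_def intro!: sum.cong prod.cong)
qed

lemma sum_permutations_eq_0_if_odd:
  fixes t :: "('n::finite \<Rightarrow> 'n) \<Rightarrow> real"
  assumes "a \<noteq> b" "\<And>p. p permutes UNIV \<Longrightarrow> t (p \<circ> Transposition.transpose a b) = - t p"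
  shows "(\<Sum>p\<in>{p. p permutes UNIV}. t p) = 0"
proof -
  have "Transposition.transpose a b permutes UNIV" by (rule permutes_swap_id) auto
  then have "(\<Sum>p\<in>{p. p permutes UNIV}. t p) = (\<Sum>p\<in>{p. p permutes UNIV}. t (p \<circ> Transposition.transpose a b))"
    by (rule sum_permutations_compose_right)
  also have "\<dots> = - (\<Sum>p\<in>{p. p permutes UNIV}. t p)"
    by (simp add: assms(2) sum_negf)
  finally show ?thesis by simp
qed

lemma sum_permutations_sign_symmetric_eq_0:
  fixes A :: "'n::finite \<Rightarrow> 'n \<Rightarrow> real" and C :: "'n \<Rightarrow> 'n \<Rightarrow> real"
  assumes "l \<noteq> i" and C_sym: "\<And>a b. C a b = C b a"
  shows "(\<Sum>p\<in>{p. p permutes UNIV}. of_int (sign p) * C (p l) (p i) * (\<Prod>k\<in>UNIV-{l}-{i}. A k (p k))) = 0"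
proof (rule sum_permutations_eq_0_if_odd[OF \<open>l \<noteq> i\<close>[symmetric]])
  fix p :: "'n \<Rightarrow> 'n" assume "p permutes UNIV"
  then have "sign (p \<circ> Transposition.transpose i l) = - sign p"
    using \<open>l \<noteq> i\<close> sign_compose[OF permutes_imp_permutation[OF _ \<open>p permutes UNIV\<close>] permutation_swap_id]
    by (simp add: sign_swap_id)
  moreover have "(\<Prod>k\<in>UNIV-{l}-{i}. A k ((p \<circ> Transposition.transpose i l) k)) = (\<Prod>k\<in>UNIV-{l}-{i}. A k (p k))"
    by (rule prod.cong) (auto simp: Transposition.transpose_def)
  ultimately show "of_int (sign (p \<circ> Transposition.transpose i l)) * C ((p \<circ> Transposition.transpose i l) l)
        ((p \<circ> Transposition.transpose i l) i) * (\<Prod>k\<in>UNIV-{l}-{i}. A k ((p \<circ> Transposition.transpose i l) k))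
      = - (of_int (sign p) * C (p l) (p i) * (\<Prod>k\<in>UNIV-{l}-{i}. A k (p k)))"
    using \<open>l \<noteq> i\<close> C_sym[of "p i" "p l"] by simp
qed

text \<open>Piola identity: the rows of the cofactor matrix of a \<open>C\<^sup>2\<close> map are divergence free. Here \<open>B k l m\<close>
  stands for \<open>\<partial>\<^sub>m A k l\<close>, whose symmetry in \<open>l, m\<close> makes the terms cancel in pairs.\<close>
lemma sum_cof_deriv_eq_0:
  fixes A :: "'n::finite \<Rightarrow> 'n \<Rightarrow> real" and B :: "'n \<Rightarrow> 'n \<Rightarrow> 'n \<Rightarrow> real"
  assumes B_sym: "\<And>k l m. B k l m = B k m l"
  shows "(\<Sum>j\<in>UNIV. cof_deriv A (\<lambda>k l. B k l j) i j) = 0"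
proof -
  let ?P = "{p. p permutes (UNIV::'n set)}"
  define T where "T l p = (if l = i then 0 else
      of_int (sign p) * B l (p l) (p i) * (\<Prod>k\<in>UNIV-{l}-{i}. A k (p k)))" for l p
  have row_i: "(\<Prod>k\<in>UNIV-{l}. (if k = i then (if p k = j then 1 else 0) else A k (p k))) =
      (if p i = j then 1 else 0) * (\<Prod>k\<in>UNIV-{l}-{i}. A k (p k))" if "l \<noteq> i" for l p j
    using that by (subst prod.remove[of _ i]) (auto intro!: prod.cong)
  have "(\<Sum>j\<in>UNIV. cof_deriv A (\<lambda>k l. B k l j) i j)
      = (\<Sum>j\<in>UNIV. \<Sum>p\<in>?P. \<Sum>l\<in>UNIV. (if p i = j then T l p else 0))"
    unfolding cof_deriv_def sum_distrib_left
    by (intro sum.cong refl) (auto simp: T_def row_i)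
  also have "\<dots> = (\<Sum>l\<in>UNIV. \<Sum>p\<in>?P. T l p)"
    by (subst sum.swap, subst sum.swap) (simp add: sum.swap[of _ UNIV ?P])
  also have "\<dots> = 0"
  proof (rule sum.neutral, rule ballI)
    fix l :: 'n
    show "(\<Sum>p\<in>?P. T l p) = 0"
      using sum_permutations_sign_symmetric_eq_0[of l i "B l" A] B_sym
      by (cases "l = i") (simp_all add: T_def)
  qed
  finally show ?thesis .
qed

lemma opnorm_lipschitz:
  fixes A B :: "real^'n^'m"
  shows "\<bar>opnorm A - opnorm B\<bar> \<le> real CARD('m) * real CARD('n) * norm (A - B)"
proof -
  have onorm_diff_le: "onorm ((*v) X) \<le> onorm ((*v) Y) + onorm ((*v) (X - Y))" for X Y :: "real^'n^'m"
  proof -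
    have "(*v) X = (\<lambda>x. Y *v x + (X - Y) *v x)" by (auto simp: fun_eq_iff algebra_simps)
    then show ?thesis using onorm_triangle[of "(*v) Y" "(*v) (X - Y)"] by simp
  qed
  have "onorm ((*v) (B - A)) = onorm ((*v) (A - B))"
  proof -
    have "(*v) (B - A) = (\<lambda>x. - ((A - B) *v x))" by (auto simp: fun_eq_iff algebra_simps)
    then show ?thesis using onorm_neg[of "(*v) (A - B)"] by simp
  qed
  moreover have "onorm ((*v) (A - B)) \<le> real CARD('m) * real CARD('n) * norm (A - B)"
  proof (rule onorm_le_matrix_component)
    fix i j
    show "\<bar>(A - B) $ i $ j\<bar> \<le> norm (A - B)"
      using component_le_norm_cart[of "(A - B) $ i" j] Finite_Cartesian_Product.norm_nth_le[of "A - B" i] by linarith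
  qed
  ultimately show ?thesis
    using onorm_diff_le[of A B] onorm_diff_le[of B A] unfolding opnorm_def by linarith
qed

lemma continuous_on_opnorm: "continuous_on UNIV (opnorm :: real^'n^'m \<Rightarrow> real)"
proof (rule lipschitz_on_continuous_on, rule lipschitz_onI)
  fix A B :: "real^'n^'m"
  show "dist (opnorm A) (opnorm B) \<le> (real CARD('m) * real CARD('n)) * dist A B"
    using opnorm_lipschitz[of A B] by (simp add: dist_real_def dist_norm)
qed simp

lemma norm_vector_matrix_mult_le:
  fixes M :: "real^'n^'n" and y :: "real^'n"
  shows "norm (y v* M) \<le> opnorm M * norm y"
proof -
  let ?z = "y v* M"
  have "norm ?z * norm ?z = y \<bullet> (M *v ?z)"
    by (simp add: dot_lmul_matrix[symmetric] power2_norm_eq_inner[symmetric] power2_eq_square)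
  also have "\<dots> \<le> norm y * norm (M *v ?z)" by (rule norm_cauchy_schwarz)
  also have "\<dots> \<le> norm y * (opnorm M * norm ?z)"
    unfolding opnorm_def by (intro mult_left_mono onorm) auto
  finally have "norm ?z * norm ?z \<le> (opnorm M * norm y) * norm ?z" by (simp add: algebra_simps)
  then show ?thesis
    by (cases "norm ?z = 0") (auto simp: mult_le_cancel_right opnorm_def onorm_pos_le)
qed

lemma abs_mult_inner_vector_matrix_mult_le:
  fixes g y :: "real^'n" and M :: "real^'n^'n"
  assumes "c \<ge> 0"
  shows "\<bar>c * (g \<bullet> (y v* M))\<bar> \<le> norm g * norm y * c * opnorm M"
proof -
  have "\<bar>c * (g \<bullet> (y v* M))\<bar> \<le> c * (norm g * norm (y v* M))"
    using assms by (simp add: abs_mult mult_left_mono Cauchy_Schwarz_ineq2)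
  also have "\<dots> \<le> c * (norm g * (opnorm M * norm y))"
    using assms by (intro mult_left_mono norm_vector_matrix_mult_le norm_ge_zero) auto
  finally show ?thesis by (simp add: mult_ac)
qed

lemma inner_vector_matrix_mult_cof:
  fixes A :: "real^'n^'n" and y :: "real^'n"
  shows "(y v* A) \<bullet> (y v* cof A) = det A * (norm y)\<^sup>2"
proof -
  have "(y v* A) \<bullet> (y v* cof A)
      = (\<Sum>j\<in>UNIV. \<Sum>k\<in>UNIV. \<Sum>i\<in>UNIV. y $ k * y $ i * (A $ k $ j * cof A $ i $ j))"
    by (simp add: inner_vec_def vector_matrix_mult_def sum_product mult_ac)
  also have "\<dots> = (\<Sum>k\<in>UNIV. \<Sum>j\<in>UNIV. \<Sum>i\<in>UNIV. y $ k * y $ i * (A $ k $ j * cof A $ i $ j))"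
    by (rule sum.swap)
  also have "\<dots> = (\<Sum>k\<in>UNIV. \<Sum>i\<in>UNIV. y $ k * y $ i * (\<Sum>j\<in>UNIV. A $ k $ j * cof A $ i $ j))"
    by (rule sum.cong[OF refl], subst sum.swap) (simp add: sum_distrib_left)
  also have "\<dots> = (\<Sum>k\<in>UNIV. y $ k * y $ k * det A)"
    by (simp add: laplace_expansion_cof if_distrib[of "\<lambda>x. _ * x"] cong: if_cong)
  also have "\<dots> = det A * (norm y)\<^sup>2"
    by (simp add: power2_norm_eq_inner inner_vec_def sum_distrib_left mult_ac)
  finally show ?thesis .
qed

section \<open>Divergence\<close>

definition has_divergence_on ::
    "(real^'n \<Rightarrow> real^'n) \<Rightarrow> (real^'n \<Rightarrow> real) \<Rightarrow> (real^'n) set \<Rightarrow> bool" where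
  "has_divergence_on F d U \<longleftrightarrow> continuous_on U F \<and>
     (\<exists>D. (\<forall>j. has_dir_derivative_on (\<lambda>x. F x $ j) (axis j 1) (D j) U \<and> continuous_on U (D j)) \<and>
          (\<forall>x\<in>U. (\<Sum>j\<in>UNIV. D j x) = d x))"

lemma has_divergence_onI:
  assumes "continuous_on U F"
    and "\<And>j. has_dir_derivative_on (\<lambda>x. F x $ j) (axis j 1) (D j) U" "\<And>j. continuous_on U (D j)"
    and "\<And>x. x \<in> U \<Longrightarrow> (\<Sum>j\<in>UNIV. D j x) = d x"
  shows "has_divergence_on F d U"
  using assms unfolding has_divergence_on_def by blast

lemma has_divergence_on_cong:
  "has_divergence_on F d U \<Longrightarrow> (\<And>x. x \<in> U \<Longrightarrow> d x = d' x) \<Longrightarrow> has_divergence_on F d' U"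
  unfolding has_divergence_on_def by auto

lemma has_divergence_on_scaleR:
  assumes g': "\<And>j. has_dir_derivative_on g (axis j 1) (g' j) U" "\<And>j. continuous_on U (g' j)"
    and "continuous_on U g" and "has_divergence_on F d U"
  shows "has_divergence_on (\<lambda>x. g x *\<^sub>R F x) (\<lambda>x. (\<Sum>j\<in>UNIV. g' j x * F x $ j) + g x * d x) U"
proof -
  obtain D where F: "continuous_on U F" and D: "\<And>j. has_dir_derivative_on (\<lambda>x. F x $ j) (axis j 1) (D j) U"
    "\<And>j. continuous_on U (D j)" and d: "\<And>x. x \<in> U \<Longrightarrow> (\<Sum>j\<in>UNIV. D j x) = d x"
    using \<open>has_divergence_on F d U\<close> unfolding has_divergence_on_def by blast
  show ?thesis
  proof (rule has_divergence_onI)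
    show "continuous_on U (\<lambda>x. g x *\<^sub>R F x)"
      using \<open>continuous_on U g\<close> F by (intro continuous_intros)
  next
    fix j
    show "has_dir_derivative_on (\<lambda>x. (g x *\<^sub>R F x) $ j) (axis j 1) (\<lambda>x. g' j x * F x $ j + g x * D j x) U"
      using has_dir_derivative_on_mult[OF g'(1) D(1)] by simp
    show "continuous_on U (\<lambda>x. g' j x * F x $ j + g x * D j x)"
      using g'(2) D(2) \<open>continuous_on U g\<close> F by (intro continuous_intros)
  next
    fix x assume "x \<in> U"
    then show "(\<Sum>j\<in>UNIV. g' j x * F x $ j + g x * D j x) = (\<Sum>j\<in>UNIV. g' j x * F x $ j) + g x * d x"
      by (simp add: sum.distrib sum_distrib_left[symmetric] d)
  qed
qed

lemma integral_divergence_eq_0: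
  assumes "open U" "compact K" "K \<subseteq> U" "\<And>x. x \<notin> K \<Longrightarrow> F x = 0" and "has_divergence_on F d U"
  shows "d integrable_on U" "integral U d = 0"
proof -
  obtain D where F: "continuous_on U F" and D: "\<And>j. has_dir_derivative_on (\<lambda>x. F x $ j) (axis j 1) (D j) U"
    "\<And>j. continuous_on U (D j)" and d: "\<And>x. x \<in> U \<Longrightarrow> (\<Sum>j\<in>UNIV. D j x) = d x"
    using \<open>has_divergence_on F d U\<close> unfolding has_divergence_on_def by blast
  have F_cont: "continuous_on U (\<lambda>x. F x $ j)" for j
    using F by (intro continuous_intros)
  have F_0: "F x $ j = 0" if "x \<notin> K" for x j
    using assms(4)[OF that] by simp
  have D_int: "D j integrable_on U" "integral U (D j) = 0" for j
    using integral_dir_derivative_eq_0_open[OF assms(1-3) F_0 F_cont D(2) D(1)] by auto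
  have "(\<lambda>x. \<Sum>j\<in>UNIV. D j x) integrable_on U"
    using D_int(1) by (rule integrable_sum[OF finite])
  moreover have "integral U (\<lambda>x. \<Sum>j\<in>UNIV. D j x) = 0"
    using D_int by (simp add: integral_sum)
  ultimately show "d integrable_on U" "integral U d = 0"
    using integrable_spike_finite[of "{}" U] integral_cong[of U "\<lambda>x. \<Sum>j\<in>UNIV. D j x" d] d
    by (auto intro: integrable_eq)
qed

lemma continuous_on_if_const [continuous_intros]:
  "continuous_on U g \<Longrightarrow> continuous_on U (\<lambda>x. if b then c else g x)"
  by (cases b) auto

lemma Dmat_nth: "Dmat f x $ k $ l = frechet_derivative f (at x) (axis l 1) $ k"
  by (simp add: Dmat_def matrix_def)

definition second_partial :: "(real^'n \<Rightarrow> real^'m) \<Rightarrow> 'm \<Rightarrow> 'n \<Rightarrow> 'n \<Rightarrow> real^'n \<Rightarrow> real" where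
  "second_partial f k l m x =
     frechet_derivative (\<lambda>y. frechet_derivative f (at y) (axis l 1)) (at x) (axis m 1) $ k"

context
  fixes f :: "real^'n \<Rightarrow> real^'m" and U :: "(real^'n) set"
  assumes U: "open U" and f: "Ck_on 2 f U"
begin

lemma Ck_on_2_differentiable_on: "f differentiable_on U"
  and Ck_on_2_partial_differentiable_on:
    "(\<lambda>x. frechet_derivative f (at x) (axis l 1)) differentiable_on U"
  using f unfolding numeral_2_eq_2 by auto

lemma Ck_on_2_continuous_on_second_partial: "continuous_on U (second_partial f k l m)"
proof -
  have "continuous_on U
      (\<lambda>x. frechet_derivative (\<lambda>y. frechet_derivative f (at y) (axis l 1)) (at x) (axis m 1))"
    using f unfolding numeral_2_eq_2 by auto
  then show ?thesis
    unfolding second_partial_def[abs_def] by (intro continuous_intros)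
qed

lemma Ck_on_2_continuous_on_Dmat: "continuous_on U (\<lambda>x. Dmat f x $ k $ l)"
  unfolding Dmat_nth
  by (intro continuous_intros differentiable_imp_continuous_on Ck_on_2_partial_differentiable_on)

lemma Ck_on_2_has_dir_derivative_on_component:
  "has_dir_derivative_on (\<lambda>x. f x $ k) (axis l 1) (\<lambda>x. Dmat f x $ k $ l) U"
  unfolding Dmat_nth by (rule has_dir_derivative_on_frechet_component[OF Ck_on_2_differentiable_on U])

lemma Ck_on_2_has_dir_derivative_on_Dmat:
  "has_dir_derivative_on (\<lambda>x. Dmat f x $ k $ l) (axis m 1) (second_partial f k l m) U"
  unfolding Dmat_nth second_partial_def[abs_def]
  by (rule has_dir_derivative_on_frechet_component[OF Ck_on_2_partial_differentiable_on U])

lemma Ck_on_2_second_partial_commute: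
  assumes "x \<in> U"
  shows "second_partial f k l m x = second_partial f k m l x"
  using U assms Ck_on_2_has_dir_derivative_on_component Ck_on_2_has_dir_derivative_on_Dmat
    Ck_on_2_continuous_on_second_partial
  by (intro dir_derivatives_commute[of U x "\<lambda>x. f x $ k"]) (auto simp: continuous_on_eq_continuous_at)

lemma Ck_on_2_has_dir_derivative_on_norm_squared:
  "has_dir_derivative_on (\<lambda>x. (norm (f x))\<^sup>2) (axis j 1) (\<lambda>x. 2 * (f x v* Dmat f x) $ j) U"
proof -
  have deriv_eq: "(\<Sum>k\<in>UNIV. Dmat f x $ k $ j * f x $ k + f x $ k * Dmat f x $ k $ j)
      = 2 * (f x v* Dmat f x) $ j" for x
    unfolding vector_matrix_mult_def vec_lambda_beta sum_distrib_left by (rule sum.cong) auto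
  have "has_dir_derivative_on (\<lambda>x. \<Sum>k\<in>UNIV. f x $ k * f x $ k) (axis j 1)
      (\<lambda>x. \<Sum>k\<in>UNIV. Dmat f x $ k $ j * f x $ k + f x $ k * Dmat f x $ k $ j) U"
    by (intro has_dir_derivative_on_sum has_dir_derivative_on_mult
        Ck_on_2_has_dir_derivative_on_component)
  then show ?thesis
    by (rule has_dir_derivative_on_cong) (simp add: power2_norm_eq_inner inner_vec_def, rule deriv_eq)
qed

end

lemma continuous_on_cof_Dmat_nth:
  assumes "open U" "Ck_on 2 f U"
  shows "continuous_on U (\<lambda>x. cof (Dmat f x) $ i $ j)"
  unfolding cof_def det_def vec_lambda_beta
  by (intro continuous_intros Ck_on_2_continuous_on_Dmat[OF assms])

lemma continuous_on_cof_Dmat: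
  assumes "open U" "Ck_on 2 f U"
  shows "continuous_on U (\<lambda>x. cof (Dmat f x))"
proof -
  have "continuous_on U (\<lambda>x. \<chi> i j. cof (Dmat f x) $ i $ j)"
    by (intro continuous_on_vec_lambda continuous_on_cof_Dmat_nth[OF assms])
  then show ?thesis by simp
qed

lemma continuous_on_cof_field:
  assumes "open U" "Ck_on 2 f U"
  shows "continuous_on U (\<lambda>x. f x v* cof (Dmat f x))"
proof -
  have "continuous_on U (\<lambda>x. f x $ i)" for i
    using differentiable_imp_continuous_on[OF Ck_on_2_differentiable_on[OF assms]]
    by (intro continuous_intros)
  then show ?thesis
    unfolding vector_matrix_mult_def
    by (intro continuous_on_vec_lambda continuous_on_sum continuous_on_mult
        continuous_on_cof_Dmat_nth[OF assms])
qed

text \<open>By the Piola identity only the terms \<open>\<Sum>\<^sub>i \<Sum>\<^sub>j (\<partial>\<^sub>j f\<^sub>i) (cof Df)\<^sub>i\<^sub>j\<close> of the divergence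
  survive, and they add up to \<open>n J\<^sub>f\<close> by Laplace expansion.\<close>
lemma has_divergence_on_cof_field:
  fixes f :: "real^'n \<Rightarrow> real^'n"
  assumes "open U" "Ck_on 2 f U"
  shows "has_divergence_on (\<lambda>x. f x v* cof (Dmat f x)) (\<lambda>x. real CARD('n) * jac f x) U"
proof -
  let ?A = "\<lambda>x k l. Dmat f x $ k $ l"
  let ?dcof = "\<lambda>x i j. cof_deriv (?A x) (\<lambda>k l. second_partial f k l j x) i j"
  have cof: "has_dir_derivative_on (\<lambda>x. cof (Dmat f x) $ i $ j) (axis j 1) (\<lambda>x. ?dcof x i j) U" for i j
    using has_dir_derivative_on_cof[of "\<lambda>k l x. ?A x k l" "axis j 1" "\<lambda>k l. second_partial f k l j" U i j]
      Ck_on_2_has_dir_derivative_on_Dmat[OF assms] by simp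
  have cont_A: "continuous_on U (\<lambda>x. ?A x k l)" for k l
    by (rule Ck_on_2_continuous_on_Dmat[OF assms])
  have cont_f: "continuous_on U (\<lambda>x. f x $ k)" for k
    using Ck_on_2_differentiable_on[OF assms]
    by (intro continuous_intros differentiable_imp_continuous_on)
  show ?thesis
  proof (rule has_divergence_onI)
    show "continuous_on U (\<lambda>x. f x v* cof (Dmat f x))"
      by (rule continuous_on_cof_field[OF assms])
  next
    fix j
    show "has_dir_derivative_on (\<lambda>x. (f x v* cof (Dmat f x)) $ j) (axis j 1)
        (\<lambda>x. \<Sum>i\<in>UNIV. ?A x i j * cof (Dmat f x) $ i $ j + f x $ i * ?dcof x i j) U"
      unfolding vector_matrix_mult_def vec_lambda_beta
      by (intro has_dir_derivative_on_sum has_dir_derivative_on_mult cof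
          Ck_on_2_has_dir_derivative_on_component[OF assms])
    show "continuous_on U (\<lambda>x. \<Sum>i\<in>UNIV. ?A x i j * cof (Dmat f x) $ i $ j + f x $ i * ?dcof x i j)"
      unfolding cof_deriv_def cof_def det_def vec_lambda_beta
      by (intro continuous_intros cont_A cont_f Ck_on_2_continuous_on_second_partial[OF assms])
  next
    fix x assume "x \<in> U"
    have "(\<Sum>j\<in>UNIV. \<Sum>i\<in>UNIV. ?A x i j * cof (Dmat f x) $ i $ j + f x $ i * ?dcof x i j)
        = (\<Sum>i\<in>UNIV. f x $ i * (\<Sum>j\<in>UNIV. ?dcof x i j) + (\<Sum>j\<in>UNIV. ?A x i j * cof (Dmat f x) $ i $ j))"
      by (subst sum.swap) (simp add: sum.distrib sum_distrib_left)
    also have "\<dots> = real CARD('n) * jac f x"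
      using sum_cof_deriv_eq_0[of "\<lambda>k l m. second_partial f k l m x"]
        Ck_on_2_second_partial_commute[OF assms \<open>x \<in> U\<close>]
      by (simp add: laplace_expansion_cof jac_def)
    finally show "(\<Sum>j\<in>UNIV. \<Sum>i\<in>UNIV. ?A x i j * cof (Dmat f x) $ i $ j + f x $ i * ?dcof x i j)
        = real CARD('n) * jac f x" .
  qed
qed

lemma grad_eq_0_outside:
  fixes g :: "real^'n \<Rightarrow> real"
  assumes "closed K" "x \<notin> K" "\<And>y. y \<notin> K \<Longrightarrow> g y = 0"
  shows "grad g x = 0"
proof -
  have "((\<lambda>_. 0) has_derivative (\<lambda>_. 0)) (at x)" by simp
  then have "(g has_derivative (\<lambda>_. 0)) (at x)"
    by (rule has_derivative_transform_within_open[of _ _ x UNIV "- K"]) (use assms in auto)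
  then have "frechet_derivative g (at x) = (\<lambda>_. 0)"
    by (rule frechet_derivative_at[symmetric])
  then show ?thesis by (simp add: grad_def vec_eq_iff)
qed

lemma continuous_on_grad:
  assumes "Ck_on 1 g U"
  shows "continuous_on U (grad g)"
  using assms unfolding One_nat_def grad_def[abs_def] by (auto intro!: continuous_on_vec_lambda)

lemma continuous_on_norm_squared_compose:
  assumes "continuous_on {0..} \<Psi>" "continuous_on U f"
  shows "continuous_on U (\<lambda>x. \<Psi> ((norm (f x))\<^sup>2))"
  by (rule continuous_on_compose2[OF assms(1)]) (use assms(2) in \<open>auto intro!: continuous_intros\<close>)

lemma has_divergence_on_weighted_cof_field:
  fixes f :: "real^'n \<Rightarrow> real^'n" and \<eta> \<Psi> \<Psi>' :: "_ \<Rightarrow> real"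
  assumes U: "open U" and f: "Ck_on 2 f U" and \<eta>: "Ck_on 1 \<eta> U"
    and \<Psi>: "\<And>t. t \<ge> 0 \<Longrightarrow> (\<Psi> has_real_derivative \<Psi>' t) (at t within {0..})"
    and \<Psi>'_cont: "continuous_on {0..} \<Psi>'"
  shows "has_divergence_on (\<lambda>x. (\<eta> x * \<Psi> ((norm (f x))\<^sup>2)) *\<^sub>R (f x v* cof (Dmat f x)))
     (\<lambda>x. \<Psi> ((norm (f x))\<^sup>2) * (grad \<eta> x \<bullet> (f x v* cof (Dmat f x)))
        + \<eta> x * (real CARD('n) * \<Psi> ((norm (f x))\<^sup>2) + 2 * (norm (f x))\<^sup>2 * \<Psi>' ((norm (f x))\<^sup>2))
          * jac f x) U"
proof -
  let ?Q = "\<lambda>x. (norm (f x))\<^sup>2" and ?S = "\<lambda>x. f x v* cof (Dmat f x)"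
  define g' where
    "g' j x = grad \<eta> x $ j * \<Psi> (?Q x) + \<eta> x * (\<Psi>' (?Q x) * (2 * (f x v* Dmat f x) $ j))" for j x
  have \<eta>_diff: "\<eta> differentiable_on U"
    using \<eta> unfolding One_nat_def by simp
  have f_cont: "continuous_on U f"
    by (rule differentiable_imp_continuous_on[OF Ck_on_2_differentiable_on[OF U f]])
  have \<Psi>_cont: "continuous_on {0..} \<Psi>"
    using \<Psi> by (intro DERIV_continuous_on) auto
  have \<Psi>Q_cont: "continuous_on U (\<lambda>x. \<Psi> (?Q x))" "continuous_on U (\<lambda>x. \<Psi>' (?Q x))"
    using continuous_on_norm_squared_compose[OF \<Psi>_cont f_cont]
      continuous_on_norm_squared_compose[OF \<Psi>'_cont f_cont] by auto
  have "has_dir_derivative_on (\<lambda>x. \<eta> x * \<Psi> (?Q x)) (axis j 1) (g' j) U" for j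
    unfolding g'_def grad_def vec_lambda_beta
    by (intro has_dir_derivative_on_mult has_dir_derivative_on_frechet[OF \<eta>_diff U]
        has_dir_derivative_on_compose_nonneg[OF \<Psi>] Ck_on_2_has_dir_derivative_on_norm_squared[OF U f]) auto
  moreover have "continuous_on U (g' j)" for j
    unfolding g'_def vector_matrix_mult_def vec_lambda_beta
    using continuous_on_grad[OF \<eta>] differentiable_imp_continuous_on[OF \<eta>_diff] f_cont
    by (intro continuous_intros \<Psi>Q_cont Ck_on_2_continuous_on_Dmat[OF U f])
  moreover have "continuous_on U (\<lambda>x. \<eta> x * \<Psi> (?Q x))"
    using differentiable_imp_continuous_on[OF \<eta>_diff] by (intro continuous_intros \<Psi>Q_cont)
  ultimately have div: "has_divergence_on (\<lambda>x. (\<eta> x * \<Psi> (?Q x)) *\<^sub>R ?S x)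
      (\<lambda>x. (\<Sum>j\<in>UNIV. g' j x * ?S x $ j) + \<eta> x * \<Psi> (?Q x) * (real CARD('n) * jac f x)) U"
    by (intro has_divergence_on_scaleR has_divergence_on_cof_field[OF U f])
  have "(\<Sum>j\<in>UNIV. g' j x * ?S x $ j) + \<eta> x * \<Psi> (?Q x) * (real CARD('n) * jac f x)
      = \<Psi> (?Q x) * (grad \<eta> x \<bullet> ?S x)
        + \<eta> x * (real CARD('n) * \<Psi> (?Q x) + 2 * ?Q x * \<Psi>' (?Q x)) * jac f x" for x
  proof -
    have "g' j x * ?S x $ j = \<Psi> (?Q x) * (grad \<eta> x $ j * ?S x $ j)
        + \<eta> x * \<Psi>' (?Q x) * 2 * ((f x v* Dmat f x) $ j * ?S x $ j)" for j
      by (simp add: g'_def algebra_simps)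
    then have sum_eq: "(\<Sum>j\<in>UNIV. g' j x * ?S x $ j)
        = \<Psi> (?Q x) * (grad \<eta> x \<bullet> ?S x) + \<eta> x * \<Psi>' (?Q x) * 2 * ((f x v* Dmat f x) \<bullet> ?S x)"
      by (simp add: inner_vec_def sum.distrib sum_distrib_left)
    have inner_eq: "(f x v* Dmat f x) \<bullet> ?S x = jac f x * ?Q x"
      by (simp add: jac_def inner_vector_matrix_mult_cof)
    show ?thesis unfolding sum_eq inner_eq by (simp add: algebra_simps)
  qed
  then show ?thesis by (intro has_divergence_on_cong[OF div])
qed

lemma integral_weighted_jacobian_eq:
  fixes f :: "real^'n \<Rightarrow> real^'n" and \<eta> \<Psi> \<Psi>' :: "_ \<Rightarrow> real"
  assumes U: "open U" and f: "Ck_on 2 f U" and \<eta>: "Ck_on 1 \<eta> U"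
    and \<Psi>: "\<And>t. t \<ge> 0 \<Longrightarrow> (\<Psi> has_real_derivative \<Psi>' t) (at t within {0..})"
    and \<Psi>'_cont: "continuous_on {0..} \<Psi>'"
    and K: "compact K" "K \<subseteq> U" and \<eta>_0: "\<And>x. x \<notin> K \<Longrightarrow> \<eta> x = 0"
  shows "(\<lambda>x. \<Psi> ((norm (f x))\<^sup>2) * (grad \<eta> x \<bullet> (f x v* cof (Dmat f x)))) integrable_on U"
    and "integral U (\<lambda>x. \<eta> x * (real CARD('n) * \<Psi> ((norm (f x))\<^sup>2)
            + 2 * (norm (f x))\<^sup>2 * \<Psi>' ((norm (f x))\<^sup>2)) * jac f x)
         = - integral U (\<lambda>x. \<Psi> ((norm (f x))\<^sup>2) * (grad \<eta> x \<bullet> (f x v* cof (Dmat f x))))"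
proof -
  let ?T = "\<lambda>x. \<Psi> ((norm (f x))\<^sup>2) * (grad \<eta> x \<bullet> (f x v* cof (Dmat f x)))"
  let ?I = "\<lambda>x. \<eta> x * (real CARD('n) * \<Psi> ((norm (f x))\<^sup>2)
            + 2 * (norm (f x))\<^sup>2 * \<Psi>' ((norm (f x))\<^sup>2)) * jac f x"
  have div: "has_divergence_on (\<lambda>x. (\<eta> x * \<Psi> ((norm (f x))\<^sup>2)) *\<^sub>R (f x v* cof (Dmat f x)))
      (\<lambda>x. ?T x + ?I x) U"
    by (rule has_divergence_on_weighted_cof_field[OF U f \<eta> \<Psi> \<Psi>'_cont])
  have "(\<eta> x * \<Psi> ((norm (f x))\<^sup>2)) *\<^sub>R (f x v* cof (Dmat f x)) = 0" if "x \<notin> K" for x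
    using \<eta>_0[OF that] by simp
  note sum = integral_divergence_eq_0[OF U K this div]
  have "continuous_on {0..} \<Psi>"
    using \<Psi> by (intro DERIV_continuous_on) auto
  then have "continuous_on U ?T"
    using continuous_on_norm_squared_compose[OF _ differentiable_imp_continuous_on[OF
        Ck_on_2_differentiable_on[OF U f]]] continuous_on_grad[OF \<eta>] continuous_on_cof_field[OF U f]
    by (intro continuous_intros) auto
  moreover have "?T x = 0" if "x \<in> U" "x \<notin> K" for x
    using grad_eq_0_outside[OF compact_imp_closed[OF \<open>compact K\<close>] that(2) \<eta>_0] by simp
  ultimately show T_int: "?T integrable_on U"
    by (rule integrable_on_open_compact_support[OF U K])
  have "?I integrable_on U"
    using integrable_diff[OF sum(1) T_int] by simp
  then show "integral U ?I = - integral U ?T"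
    using sum(2) integral_add[OF T_int] by simp
qed

theorem lemma4p2:
  fixes U :: "(real^'n) set" and f :: "real^'n \<Rightarrow> real^'n"
    and \<Psi> \<Psi>' :: "real \<Rightarrow> real" and \<eta> :: "real^'n \<Rightarrow> real"
  assumes n2: "CARD('n) \<ge> 2"
    and U: "open U"
    and f: "smooth_on f U"
    and \<Psi>_deriv: "\<And>t. t \<ge> 0 \<Longrightarrow> (\<Psi> has_real_derivative \<Psi>' t) (at t within {0..})"
    and \<Psi>'_cont: "continuous_on {0..} \<Psi>'"
    and \<Psi>_nonneg: "\<And>t. t \<ge> 0 \<Longrightarrow> \<Psi> t \<ge> 0"
    and \<eta>_smooth: "smooth_on \<eta> U"
    and \<eta>_supp: "compact (closure {x. \<eta> x \<noteq> 0})" "closure {x. \<eta> x \<noteq> 0} \<subseteq> U"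
    and \<eta>_nonneg: "\<And>x. x \<in> U \<Longrightarrow> \<eta> x \<ge> 0"
  shows "\<bar>integral U (\<lambda>x. \<eta> x * (real CARD('n) * \<Psi> ((norm (f x))\<^sup>2)
              + 2 * (norm (f x))\<^sup>2 * \<Psi>' ((norm (f x))\<^sup>2)) * jac f x)\<bar>
         \<le> integral U (\<lambda>x. norm (grad \<eta> x) * norm (f x) * \<Psi> ((norm (f x))\<^sup>2)
              * opnorm (cof (Dmat f x)))"
proof -
  have f2: "Ck_on 2 f U" and \<eta>1: "Ck_on 1 \<eta> U"
    using f \<eta>_smooth unfolding smooth_on_def by blast+
  define K where "K = closure {x. \<eta> x \<noteq> 0}"
  have K: "compact K" "K \<subseteq> U"
    using \<eta>_supp by (simp_all add: K_def)
  have \<eta>_0: "\<eta> x = 0" if "x \<notin> K" for x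
    using that closure_subset[of "{x. \<eta> x \<noteq> 0}"] by (auto simp: K_def)
  let ?T = "\<lambda>x. \<Psi> ((norm (f x))\<^sup>2) * (grad \<eta> x \<bullet> (f x v* cof (Dmat f x)))"
  let ?G = "\<lambda>x. norm (grad \<eta> x) * norm (f x) * \<Psi> ((norm (f x))\<^sup>2) * opnorm (cof (Dmat f x))"
  note T = integral_weighted_jacobian_eq[OF U f2 \<eta>1 \<Psi>_deriv \<Psi>'_cont K \<eta>_0]
  have "continuous_on {0..} \<Psi>"
    using \<Psi>_deriv by (intro DERIV_continuous_on) auto
  moreover have "continuous_on U f"
    by (rule differentiable_imp_continuous_on[OF Ck_on_2_differentiable_on[OF U f2]])
  ultimately have "continuous_on U ?G"
    using continuous_on_norm_squared_compose continuous_on_grad[OF \<eta>1]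
      continuous_on_compose2[OF continuous_on_opnorm continuous_on_cof_Dmat[OF U f2]]
    by (intro continuous_intros) auto
  moreover have "?G x = 0" if "x \<in> U" "x \<notin> K" for x
    using grad_eq_0_outside[OF compact_imp_closed[OF \<open>compact K\<close>] that(2) \<eta>_0] by simp
  ultimately have G_int: "?G integrable_on U"
    by (rule integrable_on_open_compact_support[OF U K])
  have "norm (?T x) \<le> ?G x" if "x \<in> U" for x
    using abs_mult_inner_vector_matrix_mult_le[OF \<Psi>_nonneg[OF zero_le_power2]] by simp
  with T(1) G_int have "norm (integral U ?T) \<le> integral U ?G"
    by (rule integral_norm_bound_integral)
  with T(2) show ?thesis by simp
qed

end
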